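(* Let $\{f_t\}_{t\in[0,1]}$ be a generic one-parameter PL family on a $d$-dimensional combinatorial manifold with triangulation $K$ and vertex set $V$. Let $u,v\in V$ be distinct vertices and $0\le t_1<t_2\le 1$ be such that the vertex curves of $u$ and $v$ cross in the open interval $(t_1,t_2)$, i.e. $f_{t_1}(v)>f_{t_1}(u)$, $f_{t_2}(v)<f_{t_2}(u)$, and the curves $t\mapsto f_t(u)$ and $t\mapsto f_t(v)$ intersect exactly once in $(t_1,t_2)$. Assume further that no other pair of vertex curves intersects at any time in $[t_1,t_2]$. Then \[ \sum_{i=0}^{d}(-1)^i\bigl(\beta_i^{t_2}(v)-\beta_i^{t_1}(v)\bigr)\;=\;-\sum_{i=0}^{d}(-1)^i\bigl(\beta_i^{t_2}(u)-\beta_i^{t_1}(u)\bigr). \]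
   Context: A combinatorial manifold of dimension $d$ is a finite simplicial complex $K$ triangulating a manifold $\mathbb{M}$ such that the link of every vertex is homeomorphic to a $(d-1)$-sphere. A PL function on $\mathbb{M}$ is given by assigning real values to the vertices of $K$ and extending linearly on each simplex. A one-parameter PL family $\{f_t\}_{t\in[0,1]}$ assigns to each $t$ a PL function $f_t$ on $K$, with each vertex curve $t\mapsto f_t(w)$ ($w\in V$) continuous (in practice piecewise linear in $t$). The family is generic if the collection of vertex curves $\{(t,f_t(w)) : t\in[0,1]\}$, $w\in V$, has only finitely many intersection points, each an intersection of exactly two curves, occurring at pairwise distinct times $0<T_1<\dots<T_n<1$, with no point where three or more curves meet. For a vertex $w$, $\mathrm{St}(w)=\{\sigma\in K: w\in\sigma\}$ and $\mathrm{Lk}(w)=\{\tau\in K:\exists\sigma\in\mathrm{St}(w),\ \tau\subset\sigma,\ w\notin\tau\}$. The lower link of $w$ at time $t$ is $\mathrm{Lk}_t^-(w)=\{\tau\in\mathrm{Lk}(w): f_t(x)\le f_t(w)\text{ for all vertices } x \text{ of } \tau\}$. The time-varying Betti numbers are $\beta_i^t(w)=\dim_{\mathbb{R}}\widetilde H_{i-1}(\mathrm{Lk}_t^-(w);\mathbb{R})$ for $i=0,\dots,d$, where $\widetilde H$ is reduced simplicial homology with the convention $\widetilde H_{-1}(X;\mathbb{R})=0$ if $X\neq\emptyset$ and $\widetilde H_{-1}(\emptyset;\mathbb{R})=\mathbb{R}$. *)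

theory Defs
  imports "HOL-Analysis.Analysis" "HOL-Library.Function_Algebras"
begin

definition simplicial_complex :: "'v set set \<Rightarrow> bool" where
  "simplicial_complex K \<longleftrightarrow> finite K \<and>
     (\<forall>\<sigma>\<in>K. finite \<sigma> \<and> \<sigma> \<noteq> {}) \<and>
     (\<forall>\<sigma>\<in>K. \<forall>\<tau>. \<tau> \<subseteq> \<sigma> \<and> \<tau> \<noteq> {} \<longrightarrow> \<tau> \<in> K)"

definition vertices :: "'v set set \<Rightarrow> 'v set" where
  "vertices K = {w. {w} \<in> K}"

definition star :: "'v set set \<Rightarrow> 'v \<Rightarrow> 'v set set" where
  "star K w = {\<sigma>\<in>K. w \<in> \<sigma>}"

definition link :: "'v set set \<Rightarrow> 'v \<Rightarrow> 'v set set" where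
  "link K w = {\<tau>. \<tau> \<noteq> {} \<and> (\<exists>\<sigma>\<in>star K w. \<tau> \<subseteq> \<sigma> \<and> w \<notin> \<tau>)}"

definition geom_simplex :: "'v set \<Rightarrow> ('v \<Rightarrow> real) set" where
  "geom_simplex \<sigma> = {x. (\<forall>i. 0 \<le> x i) \<and> (\<forall>i. i \<notin> \<sigma> \<longrightarrow> x i = 0) \<and> sum x \<sigma> = 1}"

definition realization :: "'v set set \<Rightarrow> ('v \<Rightarrow> real) topology" where
  "realization L = subtopology (powertop_real UNIV) (\<Union>\<sigma>\<in>L. geom_simplex \<sigma>)"

text \<open>X is homeomorphic to the (d-1)-sphere; for d = 0 the (-1)-sphere is empty.\<close>
definition is_sphere :: "nat \<Rightarrow> 'a topology \<Rightarrow> bool" where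
  "is_sphere d X \<longleftrightarrow> (if d = 0 then topspace X = {} else X homeomorphic_space nsphere (d - 1))"

definition combinatorial_manifold :: "nat \<Rightarrow> 'v set set \<Rightarrow> bool" where
  "combinatorial_manifold d K \<longleftrightarrow> simplicial_complex K \<and>
     (\<forall>w\<in>vertices K. is_sphere d (realization (link K w)))"

text \<open>Augmented chain complex: the empty simplex is the unique (-1)-simplex.
  Chains of level j are real functions supported on simplices with j vertices
  (i.e. of dimension j-1). Orientation is induced by the linear order on vertices.\<close>

definition chains :: "'v set set \<Rightarrow> nat \<Rightarrow> ('v set \<Rightarrow> real) set" where
  "chains X j = {c. \<forall>\<sigma>. c \<sigma> \<noteq> 0 \<longrightarrow> \<sigma> \<in> insert {} X \<and> card \<sigma> = j}"

definition bdry :: "'v::linorder set set \<Rightarrow> ('v set \<Rightarrow> real) \<Rightarrow> ('v set \<Rightarrow> real)" where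
  "bdry X c = (\<lambda>\<tau>. \<Sum>x\<in>(\<Union>X) - \<tau>.
      (-1) ^ card {y\<in>insert x \<tau>. y < x} * c (insert x \<tau>))"

definition rscale :: "real \<Rightarrow> ('v set \<Rightarrow> real) \<Rightarrow> ('v set \<Rightarrow> real)" where
  "rscale r c = (\<lambda>\<sigma>. r * c \<sigma>)"

text \<open>dim of reduced homology in degree j-1: dim (ker \<partial>_j / im \<partial>_(j+1)),
  written as dim ker - dim im (the image lies in the kernel).\<close>
definition reduced_betti :: "'v::linorder set set \<Rightarrow> nat \<Rightarrow> nat" where
  "reduced_betti X j =
     vector_space.dim rscale {c \<in> chains X j. bdry X c = 0}
     - vector_space.dim rscale (bdry X ` chains X (Suc j))"

text \<open>A PL function is determined by its vertex values; F t w = f_t(w).\<close>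

definition lower_link :: "'v set set \<Rightarrow> (real \<Rightarrow> 'v \<Rightarrow> real) \<Rightarrow> real \<Rightarrow> 'v \<Rightarrow> 'v set set" where
  "lower_link K F t w = {\<tau>\<in>link K w. \<forall>x\<in>\<tau>. F t x \<le> F t w}"

text \<open>beta_i^t(w) = dim H~_(i-1)(Lk_t^-(w)); level i chains are (i-1)-simplices.\<close>
definition betti_t :: "'v::linorder set set \<Rightarrow> (real \<Rightarrow> 'v \<Rightarrow> real) \<Rightarrow> real \<Rightarrow> 'v \<Rightarrow> nat \<Rightarrow> nat" where
  "betti_t K F t w i = reduced_betti (lower_link K F t w) i"

definition PL_family :: "'v set set \<Rightarrow> (real \<Rightarrow> 'v \<Rightarrow> real) \<Rightarrow> bool" where
  "PL_family K F \<longleftrightarrow> (\<forall>w\<in>vertices K. continuous_on {0..1} (\<lambda>t. F t w))"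

definition generic_family :: "'v set set \<Rightarrow> (real \<Rightarrow> 'v \<Rightarrow> real) \<Rightarrow> bool" where
  "generic_family K F \<longleftrightarrow> PL_family K F \<and>
     finite {(t, F t a) | t a b. t \<in> {0..1} \<and> a \<in> vertices K \<and> b \<in> vertices K \<and> a \<noteq> b \<and> F t a = F t b} \<and>
     (\<forall>t\<in>{0..1}. \<forall>a\<in>vertices K. \<forall>b\<in>vertices K. a \<noteq> b \<and> F t a = F t b \<longrightarrow>
        0 < t \<and> t < 1 \<and>
        (\<forall>a'\<in>vertices K. \<forall>b'\<in>vertices K. a' \<noteq> b' \<and> F t a' = F t b' \<longrightarrow> {a', b'} = {a, b}))"

end

theory Submission
  imports Defs "HOL-Homology.Invariance_of_Domain"
begin

text \<open>By the Euler-Poincare formula for the augmented simplicial chain complex, the alternating sum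
  of the reduced Betti numbers of a lower link equals the alternating count of its simplices,
  the empty simplex included. The sum may stop at d: the link of a vertex is a (d-1)-sphere,
  which by invariance of domain contains no simplex with more than d vertices.

  On [t1, t2] no vertex other than u and v changes sides with respect to u or v. Hence from
  t1 to t2 the lower link of v loses exactly its simplices containing u, and the lower link
  of u gains exactly the simplices containing v. Exchanging u and v is a bijection between
  these two families that preserves the number of vertices, so the two alternating counts
  change by opposite amounts.\<close>

section \<open>Rank-nullity for subspaces of arbitrary vector spaces\<close>

lemma (in vector_space) span_inter_span_diff_independent:
  assumes B: "independent B" "finite B" and AB: "A \<subseteq> B"
    and x: "x \<in> span A" "x \<in> span (B - A)"
  shows "x = 0"
proof -
  have fin: "finite A" "finite (B - A)" using B(2) AB finite_subset by auto
  obtain a where a: "x = (\<Sum>b\<in>A. a b *s b)" using x(1) span_finite[OF fin(1)] by auto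
  obtain c where c: "x = (\<Sum>b\<in>B - A. c b *s b)" using x(2) span_finite[OF fin(2)] by auto
  define e where "e b = (if b \<in> A then a b else - c b)" for b
  have "(\<Sum>b\<in>B. e b *s b) = (\<Sum>b\<in>A. e b *s b) + (\<Sum>b\<in>B - A. e b *s b)"
    using sum.subset_diff[OF AB B(2)] by (simp add: add.commute)
  also have "(\<Sum>b\<in>A. e b *s b) = x" unfolding a e_def by simp
  also have "(\<Sum>b\<in>B - A. e b *s b) = - x" unfolding c e_def by (simp add: sum_negf)
  finally have "\<forall>b\<in>A. e b = 0"
    using independentD[OF B(1) B(2) subset_refl] AB by auto
  then show ?thesis unfolding a e_def by simp
qed

lemma (in vector_space) dim_subset_finite_span:
  assumes "S \<subseteq> T" "T \<subseteq> span W" "finite W"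
  shows "dim S \<le> dim T"
proof -
  obtain B where B: "B \<subseteq> T" "independent B" "T \<subseteq> span B" "card B = dim T"
    using basis_exists by blast
  then have "finite B" using independent_span_bound assms(2,3) by blast
  then show ?thesis using dim_le_card[of S B] B assms(1) by auto
qed

lemma (in vector_space_pair) dim_kernel_add_dim_image:
  assumes f: "Vector_Spaces.linear s1 s2 f" and S: "vs1.subspace S" and W: "finite W" "S \<subseteq> vs1.span W"
  shows "vs1.dim {x\<in>S. f x = 0} + vs2.dim (f ` S) = vs1.dim S"
proof -
  interpret f: Vector_Spaces.linear s1 s2 f by (rule f)
  define N where "N = {x\<in>S. f x = 0}"
  obtain A where A: "A \<subseteq> N" "vs1.independent A" "N \<subseteq> vs1.span A" "card A = vs1.dim N"
    using vs1.basis_exists by blast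
  obtain B where B: "A \<subseteq> B" "B \<subseteq> S" "vs1.independent B" "S \<subseteq> vs1.span B"
    using vs1.maximal_independent_subset_extend[of A S] A(1,2) N_def by blast
  have finB: "finite B"
    using vs1.independent_span_bound[OF W(1) B(3)] B(2) W(2) by blast
  define C where "C = B - A"
  have cardB: "card B = card A + card C"
    unfolding C_def using finB B(1) by (simp add: card_Diff_subset card_mono finite_subset)
  have "inj_on f (vs1.span C)"
    unfolding f.inj_on_iff_eq_0[OF vs1.subspace_span]
  proof (intro ballI impI)
    fix x assume x: "x \<in> vs1.span C" and fx: "f x = 0"
    have "vs1.span C \<subseteq> S" using vs1.span_minimal[OF _ S] B(2) C_def by blast
    then have "x \<in> vs1.span A" using x fx A(3) N_def by blast
    then show "x = 0"
      using vs1.span_inter_span_diff_independent[OF B(3) finB B(1)] x C_def by blast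
  qed
  moreover have "vs1.independent C" using vs1.independent_mono[OF B(3)] C_def by blast
  ultimately have "vs2.dim (vs2.span (f ` C)) = card C"
    using f.independent_injective_image vs2.dim_span_eq_card_independent
      card_image inj_on_subset[OF _ vs1.span_superset] by metis
  moreover have "vs2.span (f ` C) = f ` S"
  proof -
    have "f ` A \<subseteq> {0}" using A(1) N_def by auto
    then have "f ` C \<subseteq> f ` B" "f ` B \<subseteq> insert 0 (f ` C)"
      using B(1) unfolding C_def by auto
    then have "vs2.span (f ` B) = vs2.span (f ` C)"
      using vs2.span_mono by (metis vs2.span_insert_0 subset_antisym)
    then show ?thesis using f.span_image vs1.span_subspace[OF B(2,4) S] by simp
  qed
  ultimately show ?thesis
    using cardB A(4) vs1.basis_card_eq_dim[OF B(2,4,3)] N_def by simp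
qed

lemma simplicial_complex_finite: "simplicial_complex X \<Longrightarrow> finite X"
  and simplicial_complex_finite_simplex: "simplicial_complex X \<Longrightarrow> \<sigma> \<in> X \<Longrightarrow> finite \<sigma>"
  and simplicial_complex_face: "simplicial_complex X \<Longrightarrow> \<sigma> \<in> X \<Longrightarrow> \<tau> \<subseteq> \<sigma> \<Longrightarrow> \<tau> \<noteq> {} \<Longrightarrow> \<tau> \<in> X"
  unfolding simplicial_complex_def by blast+

lemma simplicial_complex_finite_union: "simplicial_complex X \<Longrightarrow> finite (\<Union>X)"
  using simplicial_complex_finite simplicial_complex_finite_simplex by blast

lemma linkE:
  assumes "\<tau> \<in> link K w"
  obtains \<sigma> where "\<sigma> \<in> K" "w \<in> \<sigma>" "\<tau> \<subseteq> \<sigma>" "w \<notin> \<tau>" "\<tau> \<noteq> {}"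
  using assms unfolding link_def star_def by blast

lemma vertex_of_link_simplex:
  assumes K: "simplicial_complex K" and "\<tau> \<in> link K w" "x \<in> \<tau>"
  shows "x \<in> vertices K" "x \<noteq> w"
proof -
  obtain \<sigma> where "\<sigma> \<in> K" "\<tau> \<subseteq> \<sigma>" "w \<notin> \<tau>" using linkE[OF assms(2)] by metis
  then show "x \<in> vertices K" "x \<noteq> w"
    using simplicial_complex_face[OF K, of \<sigma> "{x}"] assms(3) unfolding vertices_def by auto
qed

lemma finite_link_simplex: "simplicial_complex K \<Longrightarrow> \<tau> \<in> link K w \<Longrightarrow> finite \<tau>"
  by (metis linkE simplicial_complex_finite_simplex finite_subset)

lemma simplicial_complex_lower_link:
  assumes K: "simplicial_complex K"
  shows "simplicial_complex (lower_link K F t w)"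
  unfolding simplicial_complex_def
proof (intro conjI ballI allI impI)
  have "lower_link K F t w \<subseteq> (\<Union>\<sigma>\<in>K. Pow \<sigma>)"
    unfolding lower_link_def link_def star_def by blast
  moreover have "finite (\<Union>\<sigma>\<in>K. Pow \<sigma>)"
    using simplicial_complex_finite[OF K] simplicial_complex_finite_simplex[OF K] by blast
  ultimately show "finite (lower_link K F t w)" by (rule finite_subset)
next
  fix \<tau> assume "\<tau> \<in> lower_link K F t w"
  then have "\<tau> \<in> link K w" unfolding lower_link_def by blast
  then show "finite \<tau>" "\<tau> \<noteq> {}"
    using finite_link_simplex[OF K] unfolding link_def by blast+
next
  fix \<tau> \<rho> assume "\<tau> \<in> lower_link K F t w" "\<rho> \<subseteq> \<tau> \<and> \<rho> \<noteq> {}"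
  then show "\<rho> \<in> lower_link K F t w"
    unfolding lower_link_def link_def by blast
qed

interpretation chain_space: vector_space rscale
  by unfold_locales (auto simp: rscale_def algebra_simps fun_eq_iff)

interpretation chain_pair: vector_space_pair rscale rscale ..

definition simplices :: "'v set set \<Rightarrow> nat \<Rightarrow> 'v set set" where
  "simplices X j = {\<sigma>\<in>insert {} X. card \<sigma> = j}"

lemma finite_simplices: "finite X \<Longrightarrow> finite (simplices X j)"
  unfolding simplices_def by simp

lemma sum_apply: "sum f A x = (\<Sum>a\<in>A. f a x)"
  by (induction A rule: infinite_finite_induct) auto

lemma inj_indicator_singleton: "inj (\<lambda>\<sigma>. indicator {\<sigma>} :: 'a \<Rightarrow> real)"
  by (rule injI) (metis indicator_simps singletonI singleton_iff zero_neq_one)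

lemma subspace_chains: "chain_space.subspace (chains X j)"
proof -
  have "(x + y) \<sigma> \<noteq> 0 \<Longrightarrow> x \<sigma> \<noteq> 0 \<or> y \<sigma> \<noteq> 0" for x y :: "'a set \<Rightarrow> real" and \<sigma>
    by auto
  then show ?thesis
    unfolding chain_space.subspace_def chains_def rscale_def by fastforce
qed

lemma chains_eq_span_indicators:
  assumes "finite X"
  shows "chains X j = chain_space.span ((\<lambda>\<sigma>. indicator {\<sigma>}) ` simplices X j)"
proof
  show "chain_space.span ((\<lambda>\<sigma>. indicator {\<sigma>}) ` simplices X j) \<subseteq> chains X j"
    by (rule chain_space.span_minimal[OF _ subspace_chains])
      (auto simp: chains_def simplices_def indicator_def)
  show "chains X j \<subseteq> chain_space.span ((\<lambda>\<sigma>. indicator {\<sigma>}) ` simplices X j)"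
  proof
    fix c assume c: "c \<in> chains X j"
    have "c = (\<Sum>\<sigma>\<in>simplices X j. rscale (c \<sigma>) (indicator {\<sigma>}))"
    proof
      fix \<tau>
      have "(\<Sum>\<sigma>\<in>simplices X j. rscale (c \<sigma>) (indicator {\<sigma>})) \<tau>
          = (\<Sum>\<sigma>\<in>simplices X j. if \<sigma> = \<tau> then c \<tau> else 0)"
        unfolding sum_apply rscale_def by (rule sum.cong) auto
      also have "\<dots> = c \<tau>"
        using c finite_simplices[OF assms] unfolding chains_def simplices_def by auto
      finally show "c \<tau> = (\<Sum>\<sigma>\<in>simplices X j. rscale (c \<sigma>) (indicator {\<sigma>})) \<tau>" by simp
    qed
    also have "\<dots> \<in> chain_space.span ((\<lambda>\<sigma>. indicator {\<sigma>}) ` simplices X j)"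
      by (intro chain_space.span_sum chain_space.span_scale chain_space.span_base) auto
    finally show "c \<in> chain_space.span ((\<lambda>\<sigma>. indicator {\<sigma>}) ` simplices X j)" .
  qed
qed

lemma independent_indicators: "chain_space.independent ((\<lambda>\<sigma>. indicator {\<sigma>}) ` S)"
  unfolding chain_space.independent_explicit_module
proof (intro allI impI)
  fix T a e
  assume T: "finite T" "T \<subseteq> (\<lambda>\<sigma>. indicator {\<sigma>}) ` S"
    and sum0: "(\<Sum>e\<in>T. rscale (a e) e) = 0" and e: "e \<in> T"
  obtain \<sigma> where \<sigma>: "e = indicator {\<sigma>}" using T e by auto
  have "0 = (\<Sum>e\<in>T. rscale (a e) e) \<sigma>" using sum0 by simp
  also have "\<dots> = (\<Sum>e'\<in>T. if e' = e then a e' else 0)"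
    unfolding sum_apply
  proof (rule sum.cong)
    fix e' assume "e' \<in> T"
    then obtain \<rho> where \<rho>: "e' = indicator {\<rho>}" using T by auto
    have "e' = e \<longleftrightarrow> \<rho> = \<sigma>" unfolding \<rho> \<sigma> by (rule inj_eq[OF inj_indicator_singleton])
    then show "rscale (a e') e' \<sigma> = (if e' = e then a e' else 0)"
      unfolding rscale_def \<rho> by auto
  qed simp
  also have "\<dots> = a e" using T e by simp
  finally show "a e = 0" by simp
qed

lemma dim_chains:
  assumes "finite X"
  shows "chain_space.dim (chains X j) = card (simplices X j)"
  using chains_eq_span_indicators[OF assms] chain_space.dim_span_eq_card_independent[OF independent_indicators]
    card_image inj_on_subset[OF inj_indicator_singleton] by (metis subset_UNIV)

lemma linear_bdry: "Vector_Spaces.linear rscale rscale (bdry X)"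
proof -
  have "bdry X (c + e) = bdry X c + bdry X e" for c e
    unfolding bdry_def by (auto simp: fun_eq_iff sum.distrib distrib_left)
  moreover have "bdry X (rscale a c) = rscale a (bdry X c)" for a c
    unfolding bdry_def rscale_def by (auto simp: fun_eq_iff sum_distrib_left ac_simps)
  ultimately show ?thesis
    by (simp add: Vector_Spaces.linear_iff chain_space.vector_space_axioms)
qed

lemma sum_off_diagonal_antisym:
  fixes G :: "'a \<Rightarrow> 'a \<Rightarrow> 'b::linordered_ab_group_add"
  assumes V: "finite V" and anti: "\<And>x y. x \<in> V \<Longrightarrow> y \<in> V \<Longrightarrow> x \<noteq> y \<Longrightarrow> G x y = - G y x"
  shows "(\<Sum>x\<in>V. \<Sum>y\<in>V - {x}. G x y) = 0"
proof -
  have diff: "V - {x} = {y \<in> V. y \<noteq> x}" for x by auto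
  have "(\<Sum>x\<in>V. \<Sum>y\<in>V - {x}. G x y) = (\<Sum>y\<in>V. \<Sum>x\<in>V - {y}. G x y)"
    unfolding diff using sum.swap_restrict[OF V V, of G "\<lambda>x y. y \<noteq> x"] by (simp add: eq_commute)
  also have "\<dots> = (\<Sum>y\<in>V. \<Sum>x\<in>V - {y}. - G y x)"
    using anti by (intro sum.cong) auto
  also have "\<dots> = - (\<Sum>y\<in>V. \<Sum>x\<in>V - {y}. G y x)"
    by (simp add: sum_negf)
  finally show ?thesis by (simp add: equal_neg_zero)
qed

lemma card_less_insert:
  fixes a b :: "'a::linorder"
  assumes "finite T" "a \<notin> T"
  shows "card {z\<in>insert a T. z < b} = card {z\<in>T. z < b} + (if a < b then 1 else 0)"
proof -
  have "{z\<in>insert a T. z < b} = (if a < b then insert a {z\<in>T. z < b} else {z\<in>T. z < b})"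
    by auto
  then show ?thesis using assms by simp
qed

lemma bdry_sign_antisym:
  fixes x y :: "'v::linorder"
  assumes \<tau>: "finite \<tau>" and x: "x \<notin> \<tau>" and y: "y \<notin> \<tau>" and "x \<noteq> y"
  shows "(-1::real) ^ card {z\<in>insert x \<tau>. z < x} * (-1) ^ card {z\<in>insert y (insert x \<tau>). z < y}
       = - ((-1) ^ card {z\<in>insert y \<tau>. z < y} * (-1) ^ card {z\<in>insert x (insert y \<tau>). z < x})"
proof -
  have "card {z\<in>insert x \<tau>. z < x} = card {z\<in>\<tau>. z < x}"
    "card {z\<in>insert y \<tau>. z < y} = card {z\<in>\<tau>. z < y}"
    "card {z\<in>insert y (insert x \<tau>). z < y} = card {z\<in>\<tau>. z < y} + (if x < y then 1 else 0)"
    "card {z\<in>insert x (insert y \<tau>). z < x} = card {z\<in>\<tau>. z < x} + (if y < x then 1 else 0)"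
    using card_less_insert[OF \<tau> x] card_less_insert[OF \<tau> y]
      card_less_insert[of "insert x \<tau>" y] card_less_insert[of "insert y \<tau>" x] assms by auto
  then show ?thesis
    using \<open>x \<noteq> y\<close> by (cases "x < y") (simp_all add: power_add)
qed

lemma bdry_bdry:
  fixes X :: "'v::linorder set set"
  assumes fin: "finite (\<Union>X)" and c: "\<And>\<sigma>. c \<sigma> \<noteq> 0 \<Longrightarrow> finite \<sigma>"
  shows "bdry X (bdry X c) = 0"
proof
  fix \<tau> :: "'v set"
  show "bdry X (bdry X c) \<tau> = 0 \<tau>"
  proof (cases "finite \<tau>")
    case False
    then have "c (insert y (insert x \<tau>)) = 0" for x y
      using c by (meson finite_insert)
    then show ?thesis unfolding bdry_def by simp
  next
    case True
    define V where "V = \<Union>X - \<tau>"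
    define G where "G x y = (-1::real) ^ card {z\<in>insert x \<tau>. z < x} *
      ((-1) ^ card {z\<in>insert y (insert x \<tau>). z < y} * c (insert y (insert x \<tau>)))" for x y
    have "bdry X (bdry X c) \<tau> = (\<Sum>x\<in>V. \<Sum>y\<in>V - {x}. G x y)"
      unfolding bdry_def[of X "bdry X c"] V_def
    proof (rule sum.cong[OF refl])
      fix x assume "x \<in> \<Union>X - \<tau>"
      have "\<Union>X - insert x \<tau> = \<Union>X - \<tau> - {x}" by auto
      then show "(-1) ^ card {y \<in> insert x \<tau>. y < x} * bdry X c (insert x \<tau>) =
          (\<Sum>y\<in>\<Union>X - \<tau> - {x}. G x y)"
        unfolding bdry_def G_def by (simp only: sum_distrib_left)
    qed
    also have "\<dots> = 0"
    proof (rule sum_off_diagonal_antisym)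
      show "finite V" using fin V_def by simp
      fix x y assume xy: "x \<in> V" "y \<in> V" "x \<noteq> y"
      then have "x \<notin> \<tau>" "y \<notin> \<tau>" unfolding V_def by auto
      note sign = bdry_sign_antisym[OF True this xy(3)]
      have "c (insert x (insert y \<tau>)) = c (insert y (insert x \<tau>))"
        by (simp add: insert_commute)
      then show "G x y = - G y x"
        unfolding G_def mult.assoc[symmetric] sign by simp
    qed
    finally show ?thesis by simp
  qed
qed

lemma bdry_in_chains:
  assumes X: "simplicial_complex X" and c: "c \<in> chains X (Suc j)"
  shows "bdry X c \<in> chains X j"
  unfolding chains_def
proof (intro CollectI allI impI)
  fix \<tau> assume "bdry X c \<tau> \<noteq> 0"
  then obtain x where x: "x \<in> \<Union>X - \<tau>"
    and "(-1::real) ^ card {y\<in>insert x \<tau>. y < x} * c (insert x \<tau>) \<noteq> 0"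
    unfolding bdry_def by (rule sum.not_neutral_contains_not_neutral)
  then have cx: "c (insert x \<tau>) \<noteq> 0" by auto
  then have \<sigma>: "insert x \<tau> \<in> X" "card (insert x \<tau>) = Suc j"
    using c unfolding chains_def by auto
  then have "finite (insert x \<tau>)"
    using simplicial_complex_finite_simplex[OF X \<sigma>(1)] by blast
  then have "card \<tau> = j"
    using \<sigma>(2) x by simp
  moreover have "\<tau> \<in> insert {} X"
    using simplicial_complex_face[OF X \<sigma>(1)] by blast
  ultimately show "\<tau> \<in> insert {} X \<and> card \<tau> = j" by blast
qed

lemma bdry_chains_0:
  assumes X: "simplicial_complex X" and c: "c \<in> chains X 0"
  shows "bdry X c = 0"
proof -
  have "c (insert x \<tau>) = 0" for x \<tau>
  proof (rule ccontr)
    assume "c (insert x \<tau>) \<noteq> 0"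
    then have "insert x \<tau> \<in> X" "card (insert x \<tau>) = 0"
      using c unfolding chains_def by auto
    then show False
      using simplicial_complex_finite_simplex[OF X] by fastforce
  qed
  then show ?thesis unfolding bdry_def by (simp add: fun_eq_iff)
qed

section \<open>The Euler-Poincare formula\<close>

definition alternating_count :: "nat \<Rightarrow> 'a set set \<Rightarrow> real" where
  "alternating_count d S = (\<Sum>i\<le>d. (-1) ^ i * real (card {\<sigma>\<in>S. card \<sigma> = i}))"

lemma alternating_sum_shift:
  fixes z r :: "nat \<Rightarrow> real"
  shows "(\<Sum>i\<le>d. (-1) ^ i * (z i - r (Suc i)))
       = (\<Sum>i\<le>d. (-1) ^ i * (z i + r i)) - r 0 - (-1) ^ d * r (Suc d)"
  by (induction d) (auto simp: algebra_simps)

definition cycles :: "'v::linorder set set \<Rightarrow> nat \<Rightarrow> ('v set \<Rightarrow> real) set" where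
  "cycles X j = {c\<in>chains X j. bdry X c = 0}"

lemma dim_cycles_add_dim_boundaries:
  assumes "finite X"
  shows "chain_space.dim (cycles X j) + chain_space.dim (bdry X ` chains X j) = card (simplices X j)"
  using chain_pair.dim_kernel_add_dim_image[OF linear_bdry subspace_chains
      finite_imageI[OF finite_simplices[OF assms]] equalityD1[OF chains_eq_span_indicators[OF assms]]]
  unfolding cycles_def dim_chains[OF assms] .

lemma dim_boundaries_le_dim_cycles:
  assumes X: "simplicial_complex X"
  shows "chain_space.dim (bdry X ` chains X (Suc j)) \<le> chain_space.dim (cycles X j)"
proof (rule chain_space.dim_subset_finite_span)
  show "bdry X ` chains X (Suc j) \<subseteq> cycles X j"
  proof (rule image_subsetI)
    fix c assume c: "c \<in> chains X (Suc j)"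
    have "finite \<sigma>" if "c \<sigma> \<noteq> 0" for \<sigma>
      using c that simplicial_complex_finite_simplex[OF X] unfolding chains_def by fastforce
    then show "bdry X c \<in> cycles X j"
      using bdry_in_chains[OF X c] bdry_bdry[OF simplicial_complex_finite_union[OF X]]
      unfolding cycles_def by blast
  qed
  show "cycles X j \<subseteq> chain_space.span ((\<lambda>\<sigma>. indicator {\<sigma>}) ` simplices X j)"
    using chains_eq_span_indicators[OF simplicial_complex_finite[OF X]] unfolding cycles_def by blast
qed (use finite_simplices[OF simplicial_complex_finite[OF X]] in blast)

lemma dim_boundaries_0:
  assumes X: "simplicial_complex X"
  shows "chain_space.dim (bdry X ` chains X 0) = 0"
proof -
  have "bdry X ` chains X 0 \<subseteq> chain_space.span {}"
    using bdry_chains_0[OF X] by auto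
  then show ?thesis
    using chain_space.dim_le_card[of _ "{}"] by simp
qed

theorem euler_poincare:
  fixes X :: "'v::linorder set set"
  assumes X: "simplicial_complex X" and dim: "\<forall>\<sigma>\<in>X. card \<sigma> \<le> d"
  shows "(\<Sum>i\<le>d. (-1) ^ i * real (reduced_betti X i)) = alternating_count d (insert {} X)"
proof -
  define z where "z i = chain_space.dim (cycles X i)" for i
  define r where "r i = chain_space.dim (bdry X ` chains X i)" for i
  have rank: "z i + r i = card (simplices X i)" for i
    unfolding z_def r_def by (rule dim_cycles_add_dim_boundaries[OF simplicial_complex_finite[OF X]])
  have "simplices X (Suc d) = {}"
    using dim unfolding simplices_def by (auto dest: bspec)
  then have "r (Suc d) = 0" using rank[of "Suc d"] by simp
  moreover have "r 0 = 0" unfolding r_def by (rule dim_boundaries_0[OF X])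
  ultimately have "(\<Sum>i\<le>d. (-1) ^ i * (real (z i) - real (r (Suc i))))
      = (\<Sum>i\<le>d. (-1) ^ i * real (card (simplices X i)))"
    using alternating_sum_shift[of "\<lambda>i. real (z i)" "\<lambda>i. real (r i)" d]
    unfolding rank[symmetric] of_nat_add by simp
  moreover have "reduced_betti X i = z i - r (Suc i)" "r (Suc i) \<le> z i" for i
    using dim_boundaries_le_dim_cycles[OF X] unfolding reduced_betti_def z_def r_def cycles_def by auto
  ultimately show ?thesis
    unfolding alternating_count_def simplices_def by (simp add: of_nat_diff)
qed

lemma alternating_count_Un:
  assumes "finite A" "finite B" "A \<inter> B = {}"
  shows "alternating_count d (A \<union> B) = alternating_count d A + alternating_count d B"
proof -
  have "card {\<sigma>\<in>A \<union> B. card \<sigma> = i} = card {\<sigma>\<in>A. card \<sigma> = i} + card {\<sigma>\<in>B. card \<sigma> = i}" for i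
    using assms by (subst card_Un_disjoint[symmetric]) (auto intro: arg_cong[where f = card])
  then show ?thesis
    unfolding alternating_count_def by (simp add: distrib_left sum.distrib)
qed

lemma alternating_count_bij_betw:
  assumes f: "bij_betw f A B" and card: "\<And>\<sigma>. \<sigma> \<in> A \<Longrightarrow> card (f \<sigma>) = card \<sigma>"
  shows "alternating_count d A = alternating_count d B"
proof -
  have strata: "bij_betw f {\<sigma>\<in>A. card \<sigma> = i} {\<tau>\<in>B. card \<tau> = i}" for i
  proof -
    have "inj_on f {\<sigma>\<in>A. card \<sigma> = i}"
      using bij_betw_imp_inj_on[OF f] by (rule inj_on_subset) blast
    moreover have "f ` {\<sigma>\<in>A. card \<sigma> = i} = {\<tau>\<in>f ` A. card \<tau> = i}"
      using card by force
    ultimately show ?thesis using f unfolding bij_betw_def by simp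
  qed
  show ?thesis
    unfolding alternating_count_def by (simp add: bij_betw_same_card[OF strata])
qed

lemma alternating_count_split:
  assumes "finite L"
  shows "alternating_count d (insert {} L)
       = alternating_count d (insert {} {\<tau>\<in>L. u \<notin> \<tau>}) + alternating_count d {\<tau>\<in>L. u \<in> \<tau>}"
proof -
  have "insert {} L = insert {} {\<tau>\<in>L. u \<notin> \<tau>} \<union> {\<tau>\<in>L. u \<in> \<tau>}" by blast
  moreover have "alternating_count d (insert {} {\<tau>\<in>L. u \<notin> \<tau>} \<union> {\<tau>\<in>L. u \<in> \<tau>})
      = alternating_count d (insert {} {\<tau>\<in>L. u \<notin> \<tau>}) + alternating_count d {\<tau>\<in>L. u \<in> \<tau>}"
    using assms by (intro alternating_count_Un) auto
  ultimately show ?thesis by simp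
qed

section \<open>Simplices in the link of a vertex\<close>

lemma openin_Euclidean_space_not_subset_nsphere:
  assumes V: "openin (Euclidean_space (Suc n)) V" and p: "p \<in> V"
  shows "\<not> V \<subseteq> topspace (nsphere n)"
proof
  assume sub: "V \<subseteq> topspace (nsphere n)"
  define ray where "ray s = (\<lambda>i. s * p i)" for s :: real
  have "continuous_map euclideanreal (Euclidean_space (Suc n)) ray"
    unfolding Euclidean_space_def continuous_map_in_subtopology
  proof
    show "continuous_map euclideanreal (powertop_real UNIV) ray"
      unfolding continuous_map_componentwise_UNIV ray_def
      by (intro allI continuous_map_real_mult_right continuous_map_id[unfolded id_def])
    show "ray \<in> topspace euclideanreal \<rightarrow> {x. \<forall>i\<ge>Suc n. x i = 0}"
      using openin_subset[OF V] p unfolding ray_def topspace_Euclidean_space by auto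
  qed
  then have "open {s. ray s \<in> V}"
    using openin_continuous_map_preimage[OF _ V] by fastforce
  moreover have "ray 1 \<in> V" using p unfolding ray_def by simp
  ultimately obtain e where e: "e > 0" "\<And>s. dist s 1 < e \<Longrightarrow> ray s \<in> V"
    unfolding open_dist by blast
  define s where "s = 1 + e / 2"
  have "ray 1 \<in> topspace (nsphere n)" "ray s \<in> topspace (nsphere n)"
    using e sub \<open>ray 1 \<in> V\<close> unfolding s_def dist_real_def by auto
  then have "s\<^sup>2 * (\<Sum>i\<le>n. p i ^ 2) = 1" "(\<Sum>i\<le>n. p i ^ 2) = 1"
    unfolding ray_def nsphere_def by (auto simp: power_mult_distrib simp flip: sum_distrib_left)
  moreover have "s\<^sup>2 > 1" using e(1) unfolding s_def by (simp add: one_less_power)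
  ultimately show False by simp
qed

lemma continuous_map_Euclidean_space_coordinate:
  "continuous_map (subtopology (Euclidean_space n) U) euclideanreal (\<lambda>x. x i)"
  unfolding Euclidean_space_def
  by (intro continuous_map_from_subtopology continuous_map_product_projection) simp

definition corner_simplex :: "nat \<Rightarrow> (nat \<Rightarrow> real) set" where
  "corner_simplex m = {x \<in> topspace (Euclidean_space m). (\<forall>i<m. 0 < x i) \<and> (\<Sum>i<m. x i) < 1}"

lemma mem_corner_simplex:
  "x \<in> corner_simplex m \<longleftrightarrow> (\<forall>i\<ge>m. x i = 0) \<and> (\<forall>i<m. 0 < x i) \<and> (\<Sum>i<m. x i) < 1"
  unfolding corner_simplex_def topspace_Euclidean_space by blast

lemma openin_corner_simplex: "openin (Euclidean_space m) (corner_simplex m)"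
proof -
  have "{x::nat\<Rightarrow>real. \<forall>i<m. 0 < x i} = (\<Inter>i<m. {x. 0 < x i})" by auto
  also have "open \<dots>"
    by (intro open_INT ballI open_Collect_less continuous_intros) auto
  finally have "open {x::nat\<Rightarrow>real. \<forall>i<m. 0 < x i}" .
  moreover have "open {x::nat\<Rightarrow>real. (\<Sum>i<m. x i) < 1}"
    by (intro open_Collect_less continuous_intros) auto
  ultimately have "open {x::nat\<Rightarrow>real. (\<forall>i<m. 0 < x i) \<and> (\<Sum>i<m. x i) < 1}"
    by (simp add: Collect_conj_eq open_Int)
  then have "openin (top_of_set (topspace (Euclidean_space m)))
      (topspace (Euclidean_space m) \<inter> {x. (\<forall>i<m. 0 < x i) \<and> (\<Sum>i<m. x i) < 1})"
    by (rule openin_open_Int)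
  moreover have "top_of_set (topspace (Euclidean_space m)) = Euclidean_space m"
    by (simp add: Euclidean_space_def euclidean_product_topology)
  ultimately show ?thesis unfolding corner_simplex_def by (simp add: Int_def)
qed

lemma corner_simplex_nonempty: "corner_simplex m \<noteq> {}"
proof -
  define x where "x i = (if i < m then 1 / (2 * real m) else 0)" for i
  have "(\<Sum>i<m. x i) = real m / (2 * real m)"
    unfolding x_def by simp
  also have "\<dots> < 1"
    by (cases "m = 0") auto
  finally have "x \<in> corner_simplex m"
    unfolding mem_corner_simplex x_def by simp
  then show ?thesis by blast
qed

lemma barycentric_in_geom_simplex:
  assumes e: "bij_betw e {..<m} (\<rho> - {a})" and \<rho>: "finite \<rho>" "a \<in> \<rho>" and x: "x \<in> corner_simplex m"
  shows "(\<lambda>w. if w = a then 1 - (\<Sum>i<m. x i) else if w \<in> \<rho> then x (inv_into {..<m} e w) else 0)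
    \<in> geom_simplex \<rho>" (is "?g \<in> _")
proof -
  have "(\<Sum>w\<in>\<rho> - {a}. ?g w) = (\<Sum>i<m. ?g (e i))"
    using sum.reindex_bij_betw[OF e, of ?g] by simp
  also have "\<dots> = (\<Sum>i<m. x i)"
    using e \<rho>(2) bij_betw_inv_into_left[OF e] unfolding bij_betw_def by (intro sum.cong) auto
  finally have "sum ?g \<rho> = 1"
    using sum.remove[OF \<rho>, of ?g] by simp
  moreover have "0 \<le> ?g w" for w
  proof -
    have "inv_into {..<m} e w < m" if "w \<in> \<rho> - {a}"
      using bij_betwE[OF bij_betw_inv_into[OF e]] that by blast
    then show ?thesis
      using x unfolding mem_corner_simplex by (auto intro: less_imp_le)
  qed
  ultimately show ?thesis
    using \<rho>(2) unfolding geom_simplex_def by auto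
qed

lemma open_Euclidean_embedding_into_geom_simplex:
  assumes \<rho>: "finite \<rho>" "card \<rho> = Suc m"
  obtains U g where "openin (Euclidean_space m) U" "U \<noteq> {}" "inj_on g U" "g ` U \<subseteq> geom_simplex \<rho>"
    "continuous_map (subtopology (Euclidean_space m) U) (powertop_real UNIV) g"
proof -
  obtain a where a: "a \<in> \<rho>" using \<rho> by fastforce
  obtain e where e: "bij_betw e {..<m} (\<rho> - {a})"
    using ex_bij_betw_nat_finite[of "\<rho> - {a}"] \<rho> a by (auto simp: atLeast0LessThan)
  define g where "g x = (\<lambda>w. if w = a then 1 - (\<Sum>i<m. x i)
      else if w \<in> \<rho> then x (inv_into {..<m} e w) else 0)" for x :: "nat \<Rightarrow> real"
  have g_e: "g x (e i) = x i" if "i < m" for x i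
    using e that a bij_betw_inv_into_left[OF e] unfolding g_def bij_betw_def by auto
  have "inj_on g (corner_simplex m)"
  proof
    fix x y assume x: "x \<in> corner_simplex m" and y: "y \<in> corner_simplex m" and gxy: "g x = g y"
    show "x = y"
    proof
      fix i
      show "x i = y i"
      proof (cases "i < m")
        case True
        then show ?thesis using g_e[of i x] g_e[of i y] gxy by simp
      next
        case False
        then show ?thesis using x y unfolding mem_corner_simplex by simp
      qed
    qed
  qed
  moreover have "g ` corner_simplex m \<subseteq> geom_simplex \<rho>"
    using barycentric_in_geom_simplex[OF e \<rho>(1) a] unfolding g_def by blast
  moreover have "continuous_map (subtopology (Euclidean_space m) (corner_simplex m)) (powertop_real UNIV) g"
    unfolding continuous_map_componentwise_UNIV g_def
    by (intro allI continuous_intros continuous_map_Euclidean_space_coordinate) auto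
  ultimately show ?thesis
    by (rule that[OF openin_corner_simplex corner_simplex_nonempty])
qed

lemma card_simplex_le_if_homeomorphic_nsphere:
  assumes hom: "realization L homeomorphic_space nsphere n" and \<rho>: "\<rho> \<in> L" "finite \<rho>"
  shows "card \<rho> \<le> Suc n"
proof (rule ccontr)
  assume "\<not> card \<rho> \<le> Suc n"
  then obtain m where m: "card \<rho> = Suc m" "Suc n \<le> m"
    by (metis Suc_le_eq not_le not0_implies_Suc not_less0)
  obtain U g where U: "openin (Euclidean_space m) U" "U \<noteq> {}" "inj_on g U"
    "g ` U \<subseteq> geom_simplex \<rho>" "continuous_map (subtopology (Euclidean_space m) U) (powertop_real UNIV) g"
    using open_Euclidean_embedding_into_geom_simplex[OF \<rho>(2) m(1)] by blast
  obtain h where h: "homeomorphic_map (realization L) (nsphere n) h"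
    using hom unfolding homeomorphic_space homeomorphic_map_maps by blast
  have gU: "g ` U \<subseteq> topspace (realization L)"
    using U(4) \<rho>(1) unfolding realization_def by auto
  have "continuous_map (subtopology (Euclidean_space m) U) (realization L) g"
    using U(5) gU openin_subset[OF U(1)] unfolding realization_def continuous_map_in_subtopology
    by (auto simp: Int_absorb1)
  then have cont: "continuous_map (subtopology (Euclidean_space m) U) (Euclidean_space (Suc n)) (h \<circ> g)"
    using continuous_map_compose homeomorphic_imp_continuous_map[OF h]
    unfolding nsphere_def by (metis continuous_map_into_fulltopology)
  have "inj_on (h \<circ> g) U"
    using U(3) gU homeomorphic_imp_injective_map[OF h] by (simp add: comp_inj_on inj_on_subset)
  then have "openin (Euclidean_space (Suc n)) ((h \<circ> g) ` U)"
    using invariance_of_domain_Euclidean_space_gen[OF m(2) U(1) cont] by blast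
  moreover have "(h \<circ> g) ` U \<subseteq> topspace (nsphere n)"
    using gU homeomorphic_imp_surjective_map[OF h] by auto
  moreover obtain p where "p \<in> U" using U(2) by blast
  ultimately show False
    using openin_Euclidean_space_not_subset_nsphere by blast
qed

lemma card_link_simplex_le:
  assumes M: "combinatorial_manifold d K" and w: "w \<in> vertices K" and \<tau>: "\<tau> \<in> link K w"
  shows "card \<tau> \<le> d"
proof -
  have K: "simplicial_complex K" and sphere: "is_sphere d (realization (link K w))"
    using M w unfolding combinatorial_manifold_def by auto
  have fin: "finite \<tau>" using finite_link_simplex[OF K \<tau>] .
  show ?thesis
  proof (cases d)
    case 0
    obtain a where "a \<in> \<tau>" using linkE[OF \<tau>] by blast
    then have "indicator {a} \<in> geom_simplex \<tau>"
      using fin unfolding geom_simplex_def by (auto simp: indicator_def)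
    then show ?thesis
      using sphere \<tau> 0 unfolding is_sphere_def realization_def by auto
  next
    case (Suc n)
    then show ?thesis
      using card_simplex_le_if_homeomorphic_nsphere[OF _ \<tau> fin] sphere unfolding is_sphere_def by simp
  qed
qed

lemma alternating_betti_lower_link:
  assumes M: "combinatorial_manifold d K" and w: "w \<in> vertices K"
  shows "(\<Sum>i\<le>d. (-1) ^ i * real (betti_t K F t w i)) = alternating_count d (insert {} (lower_link K F t w))"
proof -
  have "simplicial_complex K" using M unfolding combinatorial_manifold_def by blast
  then have "simplicial_complex (lower_link K F t w)" by (rule simplicial_complex_lower_link)
  moreover have "\<forall>\<sigma>\<in>lower_link K F t w. card \<sigma> \<le> d"
    using card_link_simplex_le[OF M w] unfolding lower_link_def by blast
  ultimately show ?thesis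
    unfolding betti_t_def by (rule euler_poincare)
qed

section \<open>Exchanging two vertex values\<close>

lemma sign_eq_if_continuous_nonzero:
  fixes \<phi> :: "real \<Rightarrow> real"
  assumes "continuous_on {a..b} \<phi>" "\<forall>r\<in>{a..b}. \<phi> r \<noteq> 0" "s \<in> {a..b}" "t \<in> {a..b}"
  shows "\<phi> s < 0 \<longleftrightarrow> \<phi> t < 0"
proof -
  have "connected (\<phi> ` {a..b})"
    using assms(1) by (rule connected_continuous_image) simp
  then have "0 \<in> \<phi> ` {a..b}" if "\<phi> s < 0 \<and> 0 < \<phi> t \<or> \<phi> t < 0 \<and> 0 < \<phi> s"
    using that assms(3,4) unfolding connected_iff_interval by (meson image_eqI less_imp_le)
  then show ?thesis using assms(2-4) by (metis image_iff linorder_neqE_linordered_idom)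
qed

text \<open>From time s to time t the vertex values change order only by u and v exchanging
  places: every other vertex lies below both or above both of u and v, at both times.\<close>

definition swaps_only :: "'v set set \<Rightarrow> (real \<Rightarrow> 'v \<Rightarrow> real) \<Rightarrow> real \<Rightarrow> real \<Rightarrow> 'v \<Rightarrow> 'v \<Rightarrow> bool" where
  "swaps_only K F s t u v \<longleftrightarrow> F s u < F s v \<and> F t v < F t u \<and>
     (\<forall>x\<in>vertices K - {u, v}. \<forall>r\<in>{s, t}. \<forall>w\<in>{u, v}. F r x \<le> F r w \<longleftrightarrow> F s x \<le> F s u)"

lemma swaps_only_sym: "swaps_only K F s t u v \<Longrightarrow> swaps_only K F t s v u"
  unfolding swaps_only_def by (metis insert_commute insertCI)

lemma lower_link_after_swap:
  assumes K: "simplicial_complex K" and swap: "swaps_only K F s t u v"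
  shows "lower_link K F t v = {\<tau>\<in>lower_link K F s v. u \<notin> \<tau>}"
proof -
  have "(\<forall>x\<in>\<tau>. F t x \<le> F t v) \<longleftrightarrow> u \<notin> \<tau> \<and> (\<forall>x\<in>\<tau>. F s x \<le> F s v)" if \<tau>: "\<tau> \<in> link K v" for \<tau>
  proof -
    have "F t x \<le> F t v \<longleftrightarrow> F s x \<le> F s v" if "x \<in> \<tau>" "x \<noteq> u" for x
      using swap vertex_of_link_simplex[OF K \<tau> \<open>x \<in> \<tau>\<close>] that(2) unfolding swaps_only_def by blast
    then show ?thesis using swap unfolding swaps_only_def by force
  qed
  then show ?thesis unfolding lower_link_def by blast
qed

lemma swap_vertex_mem_lower_link:
  assumes K: "simplicial_complex K" and swap: "swaps_only K F s t u v"
    and \<tau>: "\<tau> \<in> lower_link K F s v" "u \<in> \<tau>"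
  shows "insert v (\<tau> - {u}) \<in> lower_link K F t u"
proof -
  have link: "\<tau> \<in> link K v" and low: "\<forall>x\<in>\<tau>. F s x \<le> F s v"
    using \<tau>(1) unfolding lower_link_def by auto
  obtain \<sigma> where \<sigma>: "\<sigma> \<in> K" "v \<in> \<sigma>" "\<tau> \<subseteq> \<sigma>" "v \<notin> \<tau>" using linkE[OF link] by metis
  have "insert v (\<tau> - {u}) \<in> link K u"
    using \<sigma> \<tau>(2) unfolding link_def star_def by blast
  moreover have "F t x \<le> F t u" if "x \<in> insert v (\<tau> - {u})" for x
  proof (cases "x = v")
    case False
    then have "x \<in> vertices K - {u, v}" "F s x \<le> F s v"
      using that low vertex_of_link_simplex[OF K link] by auto
    then show ?thesis using swap unfolding swaps_only_def by blast
  qed (use swap in \<open>simp add: swaps_only_def\<close>)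
  ultimately show ?thesis unfolding lower_link_def by blast
qed

lemma alternating_count_swap:
  assumes K: "simplicial_complex K" and swap: "swaps_only K F s t u v"
  shows "alternating_count d {\<tau>\<in>lower_link K F s v. u \<in> \<tau>} = alternating_count d {\<sigma>\<in>lower_link K F t u. v \<in> \<sigma>}"
proof (rule alternating_count_bij_betw)
  let ?A = "{\<tau>\<in>lower_link K F s v. u \<in> \<tau>}" and ?B = "{\<sigma>\<in>lower_link K F t u. v \<in> \<sigma>}"
  have A: "u \<in> \<tau>" "v \<notin> \<tau>" "finite \<tau>" if "\<tau> \<in> ?A" for \<tau>
    using that vertex_of_link_simplex(2)[OF K] finite_link_simplex[OF K] unfolding lower_link_def by blast+
  have B: "v \<in> \<sigma>" "u \<notin> \<sigma>" if "\<sigma> \<in> ?B" for \<sigma>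
    using that vertex_of_link_simplex(2)[OF K] unfolding lower_link_def by blast+
  show "bij_betw (\<lambda>\<tau>. insert v (\<tau> - {u})) ?A ?B"
  proof (rule bij_betw_byWitness[where f' = "\<lambda>\<sigma>. insert u (\<sigma> - {v})"])
    show "\<forall>\<tau>\<in>?A. insert u (insert v (\<tau> - {u}) - {v}) = \<tau>"
      using A by blast
    show "\<forall>\<sigma>\<in>?B. insert v (insert u (\<sigma> - {v}) - {u}) = \<sigma>"
      using B by blast
    show "(\<lambda>\<tau>. insert v (\<tau> - {u})) ` ?A \<subseteq> ?B"
      using swap_vertex_mem_lower_link[OF K swap] by blast
    show "(\<lambda>\<sigma>. insert u (\<sigma> - {v})) ` ?B \<subseteq> ?A"
      using swap_vertex_mem_lower_link[OF K swaps_only_sym[OF swap]] by blast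
  qed
  show "card (insert v (\<tau> - {u})) = card \<tau>" if "\<tau> \<in> ?A" for \<tau>
    using A[OF that] by (metis card_insert_disjoint card_Suc_Diff1 finite_Diff DiffD1)
qed

theorem alternating_count_lower_links_swap:
  assumes K: "simplicial_complex K" and swap: "swaps_only K F s t u v"
  shows "alternating_count d (insert {} (lower_link K F t v)) - alternating_count d (insert {} (lower_link K F s v))
    = - (alternating_count d (insert {} (lower_link K F t u)) - alternating_count d (insert {} (lower_link K F s u)))"
proof -
  have fin: "finite (lower_link K F r w)" for r w
    using simplicial_complex_lower_link[OF K] simplicial_complex_finite by blast
  show ?thesis
    using alternating_count_split[OF fin, of d s v u] alternating_count_split[OF fin, of d t u v]
      lower_link_after_swap[OF K swap] lower_link_after_swap[OF K swaps_only_sym[OF swap]]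
      alternating_count_swap[OF K swap, of d] by simp
qed

lemma swaps_only_if_no_other_crossing:
  assumes cont: "\<And>w. w \<in> vertices K \<Longrightarrow> continuous_on {s..t} (\<lambda>r. F r w)"
    and uv: "u \<in> vertices K" "v \<in> vertices K" and "s \<le> t"
    and before: "F s u < F s v" and after: "F t v < F t u"
    and no_crossing: "\<forall>r\<in>{s..t}. \<forall>a\<in>vertices K. \<forall>b\<in>vertices K. a \<noteq> b \<and> F r a = F r b \<longrightarrow> {a, b} = {u, v}"
  shows "swaps_only K F s t u v"
  unfolding swaps_only_def
proof (intro conjI before after ballI)
  fix x r w assume x: "x \<in> vertices K - {u, v}" and r: "r \<in> {s, t}" and w: "w \<in> {u, v}"
  have preserved: "F s x \<le> F s w' \<longleftrightarrow> F t x \<le> F t w'" and distinct: "F s x \<noteq> F s w'" "F t x \<noteq> F t w'"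
    if "w' \<in> {u, v}" for w'
  proof -
    have ne: "\<forall>r\<in>{s..t}. F r x - F r w' \<noteq> 0"
      using no_crossing x that uv by (auto simp: doubleton_eq_iff)
    then show "F s x \<noteq> F s w'" "F t x \<noteq> F t w'" using \<open>s \<le> t\<close> by auto
    have "continuous_on {s..t} (\<lambda>r. F r x - F r w')"
      using x that uv by (intro continuous_on_diff cont) auto
    from sign_eq_if_continuous_nonzero[OF this ne, of s t] \<open>s \<le> t\<close> ne
    show "F s x \<le> F s w' \<longleftrightarrow> F t x \<le> F t w'" by auto
  qed
  \<comment> \<open>x cannot lie strictly between u and v at time s, since the order of v and u is reversed at t\<close>
  have "F s x \<le> F s v \<longleftrightarrow> F s x \<le> F s u"
    using preserved[of u] preserved[of v] distinct[of u] distinct[of v] before after by force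
  then show "F r x \<le> F r w \<longleftrightarrow> F s x \<le> F s u"
    using r w preserved by auto
qed

theorem theorem1:
  fixes K :: "'v::linorder set set" and F :: "real \<Rightarrow> 'v \<Rightarrow> real"
    and d :: nat and u v :: 'v and t1 t2 :: real
  assumes "combinatorial_manifold d K"
    and "generic_family K F"
    and "u \<in> vertices K" and "v \<in> vertices K" and "u \<noteq> v"
    and "0 \<le> t1" and "t1 < t2" and "t2 \<le> 1"
    and "F t1 v > F t1 u" and "F t2 v < F t2 u"
    and "\<exists>!t. t1 < t \<and> t < t2 \<and> F t u = F t v"
    and "\<forall>t\<in>{t1..t2}. \<forall>a\<in>vertices K. \<forall>b\<in>vertices K.
           a \<noteq> b \<and> F t a = F t b \<longrightarrow> {a, b} = {u, v}"
  shows "(\<Sum>i\<le>d. (-1::real) ^ i * (real (betti_t K F t2 v i) - real (betti_t K F t1 v i)))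
       = - (\<Sum>i\<le>d. (-1::real) ^ i * (real (betti_t K F t2 u i) - real (betti_t K F t1 u i)))"
proof -
  have K: "simplicial_complex K"
    using assms(1) unfolding combinatorial_manifold_def by blast
  have "swaps_only K F t1 t2 u v"
  proof (rule swaps_only_if_no_other_crossing)
    show "continuous_on {t1..t2} (\<lambda>r. F r w)" if "w \<in> vertices K" for w
      using assms(2,6,8) that continuous_on_subset unfolding generic_family_def PL_family_def
      by (metis atLeastatMost_subset_iff order_refl)
  qed (use assms in auto)
  then show ?thesis
    using alternating_count_lower_links_swap[OF K, of F t1 t2 u v d]
    by (simp add: sum_subtractf right_diff_distrib
        alternating_betti_lower_link[OF assms(1) assms(3)] alternating_betti_lower_link[OF assms(1) assms(4)])
qed

end
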